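(* Let $H=([n],E)$ be a hypergraph. Then $\Delta_H$ is connected if and only if for every pair of edges $F,F'\in E$ there is a sequence of edges $F=F_1,F_2,\dots,F_r=F'$ such that for each $1\le i\le r-1$, $F_i\cup F_{i+1}\ne[n]$ or $F_i\cap F_{i+1}=\emptyset$.
   Context: A hypergraph $H=([n],E)$ has edges that are nonempty subsets of $[n]$; standing assumptions: every vertex in some edge, no edge of size 1, no edge properly contained in another. The coloring complex $\Delta_H$ is the abstract simplicial complex whose vertices are the nonempty proper subsets of $[n]$ and whose faces are the chains $\emptyset\neq A_1\subsetneq\cdots\subsetneq A_l\neq[n]$ ($l\ge0$) such that, with $A_0=\emptyset$, $A_{l+1}=[n]$, some difference $A_i\setminus A_{i-1}$ ($1\le i\le l+1$) contains an edge of $H$. *)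

theory Defs
  imports Main
begin

definition hypergraph :: "nat \<Rightarrow> nat set set \<Rightarrow> bool" where
  "hypergraph n E \<longleftrightarrow>
     (\<forall>F\<in>E. F \<noteq> {} \<and> F \<subseteq> {1..n}) \<and>
     (\<forall>v\<in>{1..n}. \<exists>F\<in>E. v \<in> F) \<and>
     (\<forall>F\<in>E. card F \<noteq> 1) \<and>
     (\<forall>F\<in>E. \<forall>G\<in>E. \<not> F \<subset> G)"

text \<open>Faces of the coloring complex: finite chains of nonempty proper subsets of [n]
(a chain is represented by the set of its members), such that, after adjoining
the empty set at the bottom and [n] at the top, some difference of two consecutive
members contains an edge of H.\<close>
definition coloring_face :: "nat \<Rightarrow> nat set set \<Rightarrow> nat set set \<Rightarrow> bool" where
  "coloring_face n E \<sigma> \<longleftrightarrow>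
     finite \<sigma> \<and>
     (\<forall>A\<in>\<sigma>. A \<noteq> {} \<and> A \<subset> {1..n}) \<and>
     (\<forall>A\<in>\<sigma>. \<forall>B\<in>\<sigma>. A \<subseteq> B \<or> B \<subseteq> A) \<and>
     (\<exists>B\<in>\<sigma> \<union> {{}, {1..n}}. \<exists>C\<in>\<sigma> \<union> {{}, {1..n}}.
        B \<subset> C \<and> \<not> (\<exists>D\<in>\<sigma>. B \<subset> D \<and> D \<subset> C) \<and>
        (\<exists>F\<in>E. F \<subseteq> C - B))"

definition coloring_complex :: "nat \<Rightarrow> nat set set \<Rightarrow> nat set set set" where
  "coloring_complex n E = {\<sigma>. coloring_face n E \<sigma>}"

definition complex_connected :: "'a set set \<Rightarrow> bool" where
  "complex_connected \<Delta> \<longleftrightarrow>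
     (\<forall>u v. {u} \<in> \<Delta> \<longrightarrow> {v} \<in> \<Delta> \<longrightarrow> (\<lambda>x y. {x, y} \<in> \<Delta>)\<^sup>*\<^sup>* u v)"

end

theory Submission
  imports Defs
begin

(* Call an edge F compatible with a set A if F is contained in A or disjoint from it.  The
   faces of the coloring complex are precisely the chains of nonempty proper subsets of [n]
   admitting an edge compatible with all members; in particular the vertices are the
   nonempty proper subsets with a compatible edge.  Let the edge graph join two edges whose
   union is not [n] or which are disjoint; the claim is that the complex is connected iff
   the edge graph is.
   - If the complex is connected, a path between vertices yields an edge path, because two
     edges compatible with a common vertex are adjacent and each 1-face has an edge
     compatible with both ends.
   - If the edge graph is connected, then (unless the complex has no vertices) every edge
     misses at least two vertices of [n]; such an edge is linked in the 1-skeleton to every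
     compatible vertex and to every adjacent edge, which links any two vertices. *)

lemma rtranclp_iff_walk:
  "R\<^sup>*\<^sup>* a b \<longleftrightarrow> (\<exists>xs. xs \<noteq> [] \<and> hd xs = a \<and> last xs = b \<and> successively R xs)"
proof
  assume "R\<^sup>*\<^sup>* a b"
  then show "\<exists>xs. xs \<noteq> [] \<and> hd xs = a \<and> last xs = b \<and> successively R xs"
  proof (induction rule: converse_rtranclp_induct)
    case base
    show ?case by (intro exI[of _ "[b]"]) simp
  next
    case (step a y)
    then obtain xs where "xs \<noteq> []" "hd xs = y" "last xs = b" "successively R xs" by blast
    with step.hyps(1) show ?case by (intro exI[of _ "a # xs"]) (simp add: successively_Cons)
  qed
next
  assume "\<exists>xs. xs \<noteq> [] \<and> hd xs = a \<and> last xs = b \<and> successively R xs"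
  then obtain xs where "xs \<noteq> []" "hd xs = a" "last xs = b" "successively R xs" by blast
  then show "R\<^sup>*\<^sup>* a b"
  proof (induction xs arbitrary: a)
    case Nil
    then show ?case by simp
  next
    case (Cons x xs)
    show ?case
    proof (cases "xs = []")
      case True
      with Cons.prems show ?thesis by simp
    next
      case False
      with Cons.prems have step: "R a (hd xs)" and walk: "successively R xs"
        by (auto simp: successively_Cons)
      have "R\<^sup>*\<^sup>* (hd xs) b" using Cons.IH False Cons.prems(3) walk by simp
      with step show ?thesis by (rule converse_rtranclp_into_rtranclp)
    qed
  qed
qed

lemma successively_within:
  assumes "xs \<noteq> []" "hd xs \<in> S"
  shows "successively (\<lambda>x y. x \<in> S \<and> y \<in> S \<and> P x y) xs \<longleftrightarrow> set xs \<subseteq> S \<and> successively P xs"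
  using assms by (induction xs rule: induct_list012) auto

lemma hypergraph_edge:
  assumes "hypergraph n E" "F \<in> E"
  shows "F \<noteq> {}" "F \<subseteq> {1..n}"
  using assms unfolding hypergraph_def by auto

lemma hypergraph_cover:
  assumes "hypergraph n E" "v \<in> {1..n}"
  obtains F where "F \<in> E" "v \<in> F"
  using assms unfolding hypergraph_def by blast

lemma hypergraph_no_singleton_edge:
  assumes "hypergraph n E" "F \<in> E"
  shows "F \<noteq> {v}"
  using assms unfolding hypergraph_def by fastforce

lemma hypergraph_antichain:
  assumes "hypergraph n E" "F \<in> E" "G \<in> E" "F \<subseteq> G"
  shows "F = G"
  using assms unfolding hypergraph_def by blast

(* An edge F is compatible with a set A if A does not cut F: it contains F or misses it.
   The faces of the coloring complex are exactly the chains having a compatible edge. *)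
definition compatible :: "'a set \<Rightarrow> 'a set \<Rightarrow> bool" where
  "compatible F A \<longleftrightarrow> F \<subseteq> A \<or> F \<inter> A = {}"

lemma coloring_faceD:
  assumes "coloring_face n E \<sigma>"
  shows "\<forall>A\<in>\<sigma>. A \<noteq> {} \<and> A \<subset> {1..n}" "\<forall>A\<in>\<sigma>. \<forall>B\<in>\<sigma>. A \<subseteq> B \<or> B \<subseteq> A"
  using assms unfolding coloring_face_def by simp_all

lemma coloring_face_gapE:
  assumes "coloring_face n E \<sigma>"
  obtains B C F where "B \<in> \<sigma> \<union> {{}, {1..n}}" "C \<in> \<sigma> \<union> {{}, {1..n}}" "B \<subset> C"
    "\<not> (\<exists>D\<in>\<sigma>. B \<subset> D \<and> D \<subset> C)" "F \<in> E" "F \<subseteq> C - B"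
proof -
  from assms have "\<exists>B\<in>\<sigma> \<union> {{}, {1..n}}. \<exists>C\<in>\<sigma> \<union> {{}, {1..n}}.
        B \<subset> C \<and> \<not> (\<exists>D\<in>\<sigma>. B \<subset> D \<and> D \<subset> C) \<and> (\<exists>F\<in>E. F \<subseteq> C - B)"
    unfolding coloring_face_def by (elim conjE)
  then show ?thesis by (elim bexE conjE) (rule that; assumption)
qed

(* Every face has an edge compatible with all of its members: the edge lying in a gap
   C - B between consecutive members is not cut by any member, as none lies strictly
   between B and C. *)
lemma face_compatible_edge:
  assumes "coloring_face n E \<sigma>"
  obtains F where "F \<in> E" "\<forall>A\<in>\<sigma>. compatible F A"
proof -
  obtain B C F where B: "B \<in> \<sigma> \<union> {{}, {1..n}}" and C: "C \<in> \<sigma> \<union> {{}, {1..n}}"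
    and gap: "\<not> (\<exists>D\<in>\<sigma>. B \<subset> D \<and> D \<subset> C)" and F: "F \<in> E" "F \<subseteq> C - B"
    using coloring_face_gapE[OF assms] by metis
  have "compatible F A" if A: "A \<in> \<sigma>" for A
  proof -
    have "A \<subseteq> {1..n}" "\<forall>A'\<in>\<sigma>. A \<subseteq> A' \<or> A' \<subseteq> A"
      using coloring_faceD[OF assms] A by auto
    with B C have "A \<subseteq> B \<or> B \<subset> A" "C \<subseteq> A \<or> A \<subset> C" by auto
    then consider "A \<subseteq> B" | "C \<subseteq> A" | "B \<subset> A" "A \<subset> C" by blast
    then show ?thesis
    proof cases
      case 1 with F(2) show ?thesis unfolding compatible_def by blast
    next
      case 2 with F(2) show ?thesis unfolding compatible_def by blast
    next
      case 3 with gap A show ?thesis by blast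
    qed
  qed
  with F(1) that show ?thesis by blast
qed

(* Conversely, a finite chain with a compatible edge F is a face: the gap is formed by the
   largest member B (or the empty set) missing F and the smallest member C (or [n])
   containing F; a member strictly between them would have to cut F. *)
lemma compatible_chain_face:
  assumes H: "hypergraph n E" and fin: "finite \<sigma>"
    and proper: "\<forall>A\<in>\<sigma>. A \<noteq> {} \<and> A \<subset> {1..n}"
    and chain: "\<forall>A\<in>\<sigma>. \<forall>B\<in>\<sigma>. A \<subseteq> B \<or> B \<subseteq> A"
    and F: "F \<in> E" "\<forall>A\<in>\<sigma>. compatible F A"
  shows "coloring_face n E \<sigma>"
proof -
  define \<tau> where "\<tau> = \<sigma> \<union> {{}, {1..n}}"
  have F_ne: "F \<noteq> {}" and F_sub: "F \<subseteq> {1..n}" using hypergraph_edge[OF H F(1)] by auto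
  have \<tau>_fin: "finite \<tau>" using fin by (simp add: \<tau>_def)
  have \<tau>_chain: "subset.chain UNIV \<tau>'" if "\<tau>' \<subseteq> \<tau>" for \<tau>'
  proof -
    have "\<forall>A\<in>\<tau>. \<forall>B\<in>\<tau>. A \<subseteq> B \<or> B \<subseteq> A"
      using chain proper unfolding \<tau>_def by auto
    with that show ?thesis unfolding subset_chain_def by blast
  qed
  define B where "B = \<Union>{A\<in>\<tau>. F \<inter> A = {}}"
  define C where "C = \<Inter>{A\<in>\<tau>. F \<subseteq> A}"
  have "B \<in> {A\<in>\<tau>. F \<inter> A = {}}"
    unfolding B_def
  proof (rule Union_in_chain)
    show "finite {A\<in>\<tau>. F \<inter> A = {}}" using \<tau>_fin by simp
    show "{A\<in>\<tau>. F \<inter> A = {}} \<noteq> {}" unfolding \<tau>_def by blast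
    show "subset.chain UNIV {A\<in>\<tau>. F \<inter> A = {}}" by (rule \<tau>_chain) blast
  qed
  then have B: "B \<in> \<tau>" "F \<inter> B = {}" by auto
  have "C \<in> {A\<in>\<tau>. F \<subseteq> A}"
    unfolding C_def
  proof (rule Inter_in_chain)
    show "finite {A\<in>\<tau>. F \<subseteq> A}" using \<tau>_fin by simp
    show "{A\<in>\<tau>. F \<subseteq> A} \<noteq> {}" using F_sub unfolding \<tau>_def by blast
    show "subset.chain UNIV {A\<in>\<tau>. F \<subseteq> A}" by (rule \<tau>_chain) blast
  qed
  then have C: "C \<in> \<tau>" "F \<subseteq> C" by auto
  have "B \<subseteq> C \<or> C \<subseteq> B"
    using \<tau>_chain[of "{B, C}"] B(1) C(1) unfolding subset_chain_def by auto
  with B(2) C(2) F_ne have BC: "B \<subset> C" by blast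
  have gap: "\<not> (\<exists>D\<in>\<sigma>. B \<subset> D \<and> D \<subset> C)"
  proof
    assume "\<exists>D\<in>\<sigma>. B \<subset> D \<and> D \<subset> C"
    then obtain D where D: "D \<in> \<sigma>" "B \<subset> D" "D \<subset> C" by blast
    have "D \<in> \<tau>" using D(1) by (simp add: \<tau>_def)
    moreover have "F \<subseteq> D \<or> F \<inter> D = {}" using F(2) D(1) unfolding compatible_def by blast
    ultimately have "C \<subseteq> D \<or> D \<subseteq> B" unfolding B_def C_def by blast
    with D show False by blast
  qed
  have "F \<subseteq> C - B" using B(2) C(2) by blast
  with B(1) C(1) BC gap F(1) have "\<exists>B\<in>\<tau>. \<exists>C\<in>\<tau>. B \<subset> C \<and> \<not> (\<exists>D\<in>\<sigma>. B \<subset> D \<and> D \<subset> C) \<and> (\<exists>F\<in>E. F \<subseteq> C - B)"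
    by blast
  with fin proper chain show ?thesis unfolding coloring_face_def \<tau>_def by (intro conjI)
qed

lemma vertex_face_iff:
  assumes H: "hypergraph n E"
  shows "{A} \<in> coloring_complex n E \<longleftrightarrow> A \<noteq> {} \<and> A \<subset> {1..n} \<and> (\<exists>F\<in>E. compatible F A)"
proof
  assume "{A} \<in> coloring_complex n E"
  then have face: "coloring_face n E {A}" by (simp add: coloring_complex_def)
  obtain F where "F \<in> E" "\<forall>X\<in>{A}. compatible F X" by (rule face_compatible_edge[OF face])
  with coloring_faceD(1)[OF face] show "A \<noteq> {} \<and> A \<subset> {1..n} \<and> (\<exists>F\<in>E. compatible F A)" by blast
next
  assume "A \<noteq> {} \<and> A \<subset> {1..n} \<and> (\<exists>F\<in>E. compatible F A)"
  then obtain F where "A \<noteq> {}" "A \<subset> {1..n}" "F \<in> E" "compatible F A" by blast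
  then have "coloring_face n E {A}" by (intro compatible_chain_face[OF H]) auto
  then show "{A} \<in> coloring_complex n E" by (simp add: coloring_complex_def)
qed

lemma edge_face:
  assumes H: "hypergraph n E" and A: "A \<noteq> {}" "A \<subseteq> B" and B: "B \<subset> {1..n}"
    and F: "F \<in> E" "compatible F A" "compatible F B"
  shows "{A, B} \<in> coloring_complex n E"
proof -
  have "coloring_face n E {A, B}" using A B F by (intro compatible_chain_face[OF H]) auto
  then show ?thesis by (simp add: coloring_complex_def)
qed

definition edge_adjacent :: "nat \<Rightarrow> nat set set \<Rightarrow> nat set \<Rightarrow> nat set \<Rightarrow> bool" where
  "edge_adjacent n E F G \<longleftrightarrow> F \<in> E \<and> G \<in> E \<and> (F \<union> G \<noteq> {1..n} \<or> F \<inter> G = {})"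

lemma edge_walk_iff:
  assumes "F \<in> E"
  shows "(\<exists>Fs :: nat set list. Fs \<noteq> [] \<and> hd Fs = F \<and> last Fs = F' \<and> set Fs \<subseteq> E \<and>
          (\<forall>i. Suc i < length Fs \<longrightarrow> Fs ! i \<union> Fs ! Suc i \<noteq> {1..n} \<or> Fs ! i \<inter> Fs ! Suc i = {}))
    \<longleftrightarrow> (edge_adjacent n E)\<^sup>*\<^sup>* F F'"
proof -
  define P where "P = (\<lambda>F G :: nat set. F \<union> G \<noteq> {1..n} \<or> F \<inter> G = {})"
  have "edge_adjacent n E = (\<lambda>F G. F \<in> E \<and> G \<in> E \<and> P F G)"
    by (simp add: edge_adjacent_def P_def fun_eq_iff)
  then have "successively (edge_adjacent n E) Fs \<longleftrightarrow> set Fs \<subseteq> E \<and>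
      (\<forall>i. Suc i < length Fs \<longrightarrow> Fs ! i \<union> Fs ! Suc i \<noteq> {1..n} \<or> Fs ! i \<inter> Fs ! Suc i = {})"
    if "Fs \<noteq> []" "hd Fs = F" for Fs
    using successively_within[OF that(1), of E P] that(2) assms
    by (simp add: successively_conv_nth P_def)
  then show ?thesis unfolding rtranclp_iff_walk by blast
qed

(* Two edges compatible with a common nonempty proper subset w are adjacent: either they are
   disjoint, or their union lies inside w, or it misses w. *)
lemma compatible_edges_adjacent:
  assumes w: "w \<noteq> {}" "w \<subset> {1..n}" and F: "F \<in> E" "compatible F w" and G: "G \<in> E" "compatible G w"
  shows "edge_adjacent n E F G"
proof -
  have "F \<inter> G = {} \<or> F \<union> G \<subseteq> w \<or> (F \<union> G) \<inter> w = {}"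
    using F(2) G(2) unfolding compatible_def by blast
  moreover have "F \<union> G \<noteq> {1..n}" if "F \<union> G \<subseteq> w" using that w(2) by blast
  moreover have "F \<union> G \<noteq> {1..n}" if "(F \<union> G) \<inter> w = {}" using that w by blast
  ultimately have "F \<union> G \<noteq> {1..n} \<or> F \<inter> G = {}" by blast
  with F(1) G(1) show ?thesis unfolding edge_adjacent_def by blast
qed

abbreviation linked :: "nat \<Rightarrow> nat set set \<Rightarrow> nat set \<Rightarrow> nat set \<Rightarrow> bool" where
  "linked n E \<equiv> (\<lambda>A B. {A, B} \<in> coloring_complex n E)\<^sup>*\<^sup>*"

lemma linked_sym:
  assumes "linked n E A B"
  shows "linked n E B A"
proof -
  have "symp (\<lambda>A B. {A, B} \<in> coloring_complex n E)" by (rule sympI) (simp add: insert_commute)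
  with assms show ?thesis by (blast intro: sympD[OF symp_rtranclp])
qed

(* Along a path in the 1-skeleton, edges compatible with the endpoints are joined in the
   edge graph: each 1-face {B, C} has an edge compatible with both B and C, which is
   adjacent to every edge compatible with B or with C. *)
lemma linked_edge_walk:
  assumes path: "linked n E A B" and A: "A \<noteq> {}" "A \<subset> {1..n}"
    and F: "F \<in> E" "compatible F A" and G: "G \<in> E" "compatible G B"
  shows "(edge_adjacent n E)\<^sup>*\<^sup>* F G"
  using path G
proof (induction arbitrary: G rule: rtranclp_induct)
  case base
  show ?case using compatible_edges_adjacent[OF A F base] by (rule r_into_rtranclp)
next
  case (step B C)
  then have face: "coloring_face n E {B, C}" by (simp add: coloring_complex_def)
  obtain K where "K \<in> E" "\<forall>X\<in>{B, C}. compatible K X" by (rule face_compatible_edge[OF face])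
  then have K: "K \<in> E" "compatible K B" "compatible K C" by auto
  have C: "C \<noteq> {}" "C \<subset> {1..n}" using coloring_faceD(1)[OF face] by auto
  have "(edge_adjacent n E)\<^sup>*\<^sup>* F K" using step.IH K(1,2) .
  moreover have "edge_adjacent n E K G" using compatible_edges_adjacent[OF C K(1,3) step.prems] .
  ultimately show ?case by (rule rtranclp.rtrancl_into_rtrancl)
qed

(* Forward direction.  An edge F is compatible with itself, so if F is a proper subset it is
   a vertex; if F = [n], then F is the only edge. *)
lemma connected_imp_edge_walk:
  assumes H: "hypergraph n E" and conn: "complex_connected (coloring_complex n E)"
    and F: "F \<in> E" and F': "F' \<in> E"
  shows "(edge_adjacent n E)\<^sup>*\<^sup>* F F'"
proof (cases "F = {1..n} \<or> F' = {1..n}")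
  case True
  then have "F = F'"
    using hypergraph_antichain[OF H F F'] hypergraph_antichain[OF H F' F]
      hypergraph_edge(2)[OF H F] hypergraph_edge(2)[OF H F'] by blast
  then show ?thesis by simp
next
  case False
  have self: "compatible X X" for X :: "nat set" by (simp add: compatible_def)
  have "{F} \<in> coloring_complex n E" "{F'} \<in> coloring_complex n E"
    using False F F' hypergraph_edge[OF H F] hypergraph_edge[OF H F'] self
    by (auto simp: vertex_face_iff[OF H])
  with conn have "linked n E F F'" unfolding complex_connected_def by blast
  moreover have "F \<noteq> {}" "F \<subset> {1..n}" using False hypergraph_edge[OF H F] by auto
  ultimately show ?thesis using linked_edge_walk F F' self by blast
qed

(* If [n] itself is an edge, it is the only edge and it is cut by every nonempty proper
   subset, so the complex has no vertices and is trivially connected. *)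
lemma full_edge_no_vertex:
  assumes H: "hypergraph n E" and full: "{1..n} \<in> E"
  shows "{A} \<notin> coloring_complex n E"
proof
  assume "{A} \<in> coloring_complex n E"
  then obtain F where A: "A \<noteq> {}" "A \<subset> {1..n}" and F: "F \<in> E" "compatible F A"
    by (auto simp: vertex_face_iff[OF H])
  have "F = {1..n}" using hypergraph_antichain[OF H F(1) full] hypergraph_edge(2)[OF H F(1)] .
  with A F(2) show False unfolding compatible_def by blast
qed

definition misses_two :: "nat \<Rightarrow> nat set \<Rightarrow> bool" where
  "misses_two n G \<longleftrightarrow> (\<exists>x y. x \<noteq> y \<and> x \<in> {1..n} - G \<and> y \<in> {1..n} - G)"

(* An edge missing exactly one vertex x is isolated in the edge graph: an adjacent edge either
   avoids x, and then is contained in G, or contains x and is disjoint from G, so it is {x}. *)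
lemma cosingleton_edge_isolated:
  assumes H: "hypergraph n E" and G: "G \<in> E" "{1..n} - G = {x}" and adj: "edge_adjacent n E G K"
  shows "K = G"
proof -
  have K: "K \<in> E" and GK: "G \<union> K \<noteq> {1..n} \<or> G \<inter> K = {}"
    using adj unfolding edge_adjacent_def by auto
  have n_split: "{1..n} = insert x G" using hypergraph_edge(2)[OF H G(1)] G(2) by blast
  have K_sub: "K \<subseteq> insert x G" using hypergraph_edge(2)[OF H K] n_split by blast
  show ?thesis
  proof (cases "x \<in> K")
    case True
    then have "G \<union> K = insert x G" using K_sub by blast
    then have "G \<union> K = {1..n}" by (simp only: n_split)
    with GK have "K \<subseteq> {x}" using K_sub by blast
    then have "K = {x}" using hypergraph_edge(1)[OF H K] by blast
    with hypergraph_no_singleton_edge[OF H K] show ?thesis by blast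
  next
    case False
    then have "K \<subseteq> G" using K_sub by blast
    then show ?thesis using hypergraph_antichain[OF H K G(1)] by blast
  qed
qed

(* Hence, if the edge graph is connected and [n] is not an edge, every edge misses at least
   two vertices: otherwise it could not reach an edge covering the missing vertex. *)
lemma edge_walk_imp_misses_two:
  assumes H: "hypergraph n E" and no_full: "{1..n} \<notin> E"
    and walks: "\<forall>F\<in>E. \<forall>F'\<in>E. (edge_adjacent n E)\<^sup>*\<^sup>* F F'" and G: "G \<in> E"
  shows "misses_two n G"
proof (rule ccontr)
  assume not_two: "\<not> misses_two n G"
  have "G \<noteq> {1..n}" using G no_full by blast
  then obtain x where x: "x \<in> {1..n} - G" using hypergraph_edge(2)[OF H G] by blast
  with not_two have cosingleton: "{1..n} - G = {x}" unfolding misses_two_def by blast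
  obtain G' where G': "G' \<in> E" "x \<in> G'" using hypergraph_cover[OF H] x by blast
  have "(edge_adjacent n E)\<^sup>*\<^sup>* G G'" using walks G G'(1) by blast
  then have "G' = G"
  proof (induction rule: rtranclp_induct)
    case base
    then show ?case by (rule refl)
  next
    case (step K K')
    then show ?case using cosingleton_edge_isolated[OF H G(1) cosingleton] by blast
  qed
  with G'(2) x show False by blast
qed

lemma linked_to_contained_edge:
  assumes H: "hypergraph n E" and A: "A \<subset> {1..n}" and G: "G \<in> E" "G \<subseteq> A"
  shows "linked n E A G"
proof -
  have "{G, A} \<in> coloring_complex n E"
    using edge_face[OF H hypergraph_edge(1)[OF H G(1)] G(2) A G(1)] G(2)
    by (simp add: compatible_def)
  then have "linked n E G A" by (rule r_into_rtranclp)
  then show ?thesis by (rule linked_sym)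
qed

lemma linked_to_complement:
  assumes H: "hypergraph n E" and A: "A \<noteq> {}" "A \<subseteq> {1..n}" and G: "G \<in> E" "G \<inter> A = {}"
  shows "linked n E A ({1..n} - G)"
proof -
  have "A \<subseteq> {1..n} - G" using A(2) G(2) by blast
  moreover have "{1..n} - G \<subset> {1..n}" using hypergraph_edge[OF H G(1)] by blast
  ultimately have "{A, {1..n} - G} \<in> coloring_complex n E"
    using edge_face[OF H A(1) _ _ G(1)] G(2) by (simp add: compatible_def Int_Diff)
  then show ?thesis by (rule r_into_rtranclp)
qed

(* An edge G missing two vertices x, y is linked to its complement via the path
   G -- insert x G -- {x} -- [n] - G; the vertex y keeps insert x G proper. *)
lemma edge_linked_to_complement:
  assumes H: "hypergraph n E" and G: "G \<in> E" "misses_two n G"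
  shows "linked n E G ({1..n} - G)"
proof -
  obtain x y where xy: "x \<noteq> y" "x \<in> {1..n} - G" "y \<in> {1..n} - G"
    using G(2) unfolding misses_two_def by blast
  define W where "W = insert x G"
  have G_sub: "G \<subseteq> {1..n}" using hypergraph_edge(2)[OF H G(1)] .
  have "W \<subseteq> {1..n}" "y \<notin> W" using xy G_sub unfolding W_def by auto
  then have W: "W \<subset> {1..n}" using xy(3) by blast
  have "linked n E W G" by (rule linked_to_contained_edge[OF H W G(1)]) (auto simp: W_def)
  then have "linked n E G W" by (rule linked_sym)
  moreover have "{{x}, W} \<in> coloring_complex n E"
    by (rule edge_face[OF H _ _ W G(1)]) (use xy(2) in \<open>auto simp: W_def compatible_def\<close>)
  then have "linked n E W {x}" by (simp add: insert_commute r_into_rtranclp)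
  moreover have "linked n E {x} ({1..n} - G)"
    using linked_to_complement[OF H _ _ G(1), of "{x}"] xy(2) by simp
  ultimately show ?thesis by (blast intro: rtranclp_trans)
qed

lemma vertex_linked_to_edge:
  assumes H: "hypergraph n E" and G: "G \<in> E" "misses_two n G"
    and A: "A \<noteq> {}" "A \<subset> {1..n}" "compatible G A"
  shows "linked n E A G"
proof (cases "G \<subseteq> A")
  case True
  then show ?thesis using linked_to_contained_edge[OF H A(2) G(1)] by blast
next
  case False
  then have "G \<inter> A = {}" using A(3) unfolding compatible_def by blast
  then have "linked n E A ({1..n} - G)" using linked_to_complement[OF H A(1) _ G(1)] A(2) by blast
  moreover have "linked n E ({1..n} - G) G" using linked_sym[OF edge_linked_to_complement[OF H G]] .
  ultimately show ?thesis by (rule rtranclp_trans)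
qed

(* Adjacent edges missing two vertices are linked: through their union if it is proper,
   and otherwise because disjoint edges are compatible with each other. *)
lemma adjacent_edges_linked:
  assumes H: "hypergraph n E" and adj: "edge_adjacent n E F G"
    and two: "misses_two n F" "misses_two n G"
  shows "linked n E F G"
proof -
  have F: "F \<in> E" and G: "G \<in> E" and FG: "F \<union> G \<noteq> {1..n} \<or> F \<inter> G = {}"
    using adj unfolding edge_adjacent_def by auto
  have F_sub: "F \<subseteq> {1..n}" and G_sub: "G \<subseteq> {1..n}"
    using hypergraph_edge(2)[OF H F] hypergraph_edge(2)[OF H G] .
  show ?thesis
  proof (cases "F \<union> G = {1..n}")
    case False
    then have W: "F \<union> G \<subset> {1..n}" using F_sub G_sub by blast
    have "linked n E (F \<union> G) F" "linked n E (F \<union> G) G"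
      by (rule linked_to_contained_edge[OF H W]; use F G in blast)+
    then show ?thesis by (rule rtranclp_trans[OF linked_sym])
  next
    case True
    with FG have "compatible G F" unfolding compatible_def by blast
    moreover have "F \<subset> {1..n}" using two(1) F_sub unfolding misses_two_def by blast
    ultimately show ?thesis
      by (intro vertex_linked_to_edge[OF H G two(2)] hypergraph_edge(1)[OF H F])
  qed
qed

lemma edge_walk_imp_linked:
  assumes H: "hypergraph n E" and two: "\<forall>G\<in>E. misses_two n G"
    and walk: "(edge_adjacent n E)\<^sup>*\<^sup>* F G"
  shows "linked n E F G"
  using walk
proof (induction rule: rtranclp_induct)
  case base
  show ?case by (rule rtranclp.rtrancl_refl)
next
  case (step K K')
  then have "K \<in> E" "K' \<in> E" unfolding edge_adjacent_def by auto
  with step.hyps(2) two have "linked n E K K'" by (intro adjacent_edges_linked[OF H]) simp_all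
  with step.IH show ?case by (rule rtranclp_trans)
qed

lemma edge_walks_imp_connected:
  assumes H: "hypergraph n E" and walks: "\<forall>F\<in>E. \<forall>F'\<in>E. (edge_adjacent n E)\<^sup>*\<^sup>* F F'"
  shows "complex_connected (coloring_complex n E)"
  unfolding complex_connected_def
proof (intro allI impI)
  fix A B assume A: "{A} \<in> coloring_complex n E" and B: "{B} \<in> coloring_complex n E"
  have "{1..n} \<notin> E" using full_edge_no_vertex[OF H _] A by blast
  then have two: "\<forall>G\<in>E. misses_two n G" using edge_walk_imp_misses_two[OF H _ walks] by blast
  obtain F where A': "A \<noteq> {}" "A \<subset> {1..n}" and F: "F \<in> E" "compatible F A"
    using A unfolding vertex_face_iff[OF H] by blast
  obtain G where B': "B \<noteq> {}" "B \<subset> {1..n}" and G: "G \<in> E" "compatible G B"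
    using B unfolding vertex_face_iff[OF H] by blast
  have "linked n E A F"
    by (rule vertex_linked_to_edge[OF H F(1) _ A' F(2)]) (use two F(1) in blast)
  also have "linked n E F G"
    by (rule edge_walk_imp_linked[OF H two]) (use walks F(1) G(1) in blast)
  also have "linked n E G B"
    by (rule linked_sym, rule vertex_linked_to_edge[OF H G(1) _ B' G(2)]) (use two G(1) in blast)
  finally show "linked n E A B" .
qed

theorem mainTheorem14:
  fixes n :: nat and E :: "nat set set"
  assumes "hypergraph n E"
  shows "complex_connected (coloring_complex n E) \<longleftrightarrow>
    (\<forall>F\<in>E. \<forall>F'\<in>E. \<exists>Fs :: nat set list. Fs \<noteq> [] \<and> hd Fs = F \<and> last Fs = F' \<and>
       set Fs \<subseteq> E \<and>
       (\<forall>i. Suc i < length Fs \<longrightarrow>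
          Fs ! i \<union> Fs ! Suc i \<noteq> {1..n} \<or> Fs ! i \<inter> Fs ! Suc i = {}))"
    (is "_ \<longleftrightarrow> ?edge_walks")
proof -
  have "complex_connected (coloring_complex n E) \<longleftrightarrow>
      (\<forall>F\<in>E. \<forall>F'\<in>E. (edge_adjacent n E)\<^sup>*\<^sup>* F F')"
    using connected_imp_edge_walk[OF assms] edge_walks_imp_connected[OF assms] by blast
  also have "\<dots> \<longleftrightarrow> ?edge_walks"
    by (intro ball_cong refl edge_walk_iff[symmetric])
  finally show ?thesis .
qed

end
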